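(* Let $M=(m_0,m_1,m_2,\ldots)$ be a (possibly finite) sequence of integers with $m_0=1$ and $m_j\ge 2$ for all $j\ge 1$. Assume that for every index $t\ge1$ and every prime $p$, if $p\mid m_t$ then $p\ge t$. Then for all positive integers $n$ and $r$ (with $r$ at most the largest index of $M$ if $M$ is finite) we have $$p_M(m_1m_2\cdots m_r\,n-1)\equiv 0 \pmod{\prod_{t=2}^{r} m_t}.$$
   Context: For $r\ge 0$ put $M_r:=m_0m_1\cdots m_r$. An $M$-ary partition of a positive integer $N$ is a partition of $N$ (order of parts disregarded) all of whose parts are of the form $M_r$ for some $r\ge 0$. $p_M(N)$ denotes the number of $M$-ary partitions of $N$. An empty product equals $1$. *)

theory Defs
  imports Main "HOL-Library.Multiset" "HOL-Library.Extended_Nat" "HOL-Computational_Algebra.Primes"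
begin

text \<open>The sequence M = (m_0, m_1, ...) is given by m :: nat => nat together with
  its largest index L :: enat (L = infinity for an infinite sequence); only the
  values m j with j <= L are meaningful.\<close>

definition Mprod :: "(nat \<Rightarrow> nat) \<Rightarrow> nat \<Rightarrow> nat" where
  "Mprod m r = (\<Prod>i\<le>r. m i)"

definition mary_partitions :: "(nat \<Rightarrow> nat) \<Rightarrow> enat \<Rightarrow> nat \<Rightarrow> nat multiset set" where
  "mary_partitions m L N =
     {P. (\<forall>x\<in>#P. \<exists>r. enat r \<le> L \<and> x = Mprod m r) \<and> sum_mset P = N}"

definition pM :: "(nat \<Rightarrow> nat) \<Rightarrow> enat \<Rightarrow> nat \<Rightarrow> nat" where
  "pM m L N = card (mary_partitions m L N)"

end

theory Submission
  imports Defs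
begin

(* Removing m_1 from M gives M' = (1, m_2, m_3, ...), and splitting off the parts equal to 1
   shows p_M(N) = sum_{j <= N div m_1} p_M'(j); in particular p_M(m_1 K - 1) = sum_{j < K} p_M'(j).
   More generally, a weighted sum sum_{i < m_1 K} w(m_1 K - 1 - i) p_M(i) equals m_1 times the
   analogous sum for p_M' with the weight w'(z) = (1/m_1) sum_{u < m_1 (z + 1)} w(u). If w is
   annihilated by the k-th forward difference and all prime factors of m_1 exceed k, Newton's
   forward difference formula shows that w' is integer valued, and w' is annihilated by the
   (k+1)-st difference. Start from the constant weight 1 (k = 1) on M' and peel off m_2, ..., m_r
   in turn: m_t is removed from a weight annihilated by the (t-1)-st difference, which is why
   the prime factors of m_t must be at least t. *)

definition fdiff :: "(nat \<Rightarrow> int) \<Rightarrow> nat \<Rightarrow> int" where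
  "fdiff f n = f (Suc n) - f n"

lemma fdiff_funpow_Suc: "(fdiff ^^ Suc k) f = (fdiff ^^ k) (fdiff f)"
  by (simp only: funpow_Suc_right comp_def)

lemma fdiff_funpow_zero: "(fdiff ^^ k) (\<lambda>_. 0) = (\<lambda>_. 0)"
  by (induction k) (simp_all add: fdiff_def)

lemma fdiff_funpow_eq_0_mono:
  assumes "(fdiff ^^ k) f = (\<lambda>_. 0)" and "k \<le> g"
  shows "(fdiff ^^ g) f = (\<lambda>_. 0)"
proof -
  have "(fdiff ^^ g) f = (fdiff ^^ (g - k)) ((fdiff ^^ k) f)"
    using \<open>k \<le> g\<close> by (metis comp_apply funpow_add le_add_diff_inverse2)
  then show ?thesis
    by (simp add: assms(1) fdiff_funpow_zero)
qed

lemma newton_forward_difference: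
  "f N = (\<Sum>g\<le>N. (fdiff ^^ g) f 0 * int (N choose g))"
proof (induction N arbitrary: f)
  case 0
  then show ?case by simp
next
  case (Suc N)
  define D where "D g = (fdiff ^^ g) f 0" for g
  have "(\<Sum>g\<le>Suc N. D g * int (Suc N choose g))
      = D 0 + (\<Sum>g\<le>N. D (Suc g) * int (N choose Suc g)) + (\<Sum>g\<le>N. D (Suc g) * int (N choose g))"
    by (simp only: sum.atMost_Suc_shift binomial_Suc_Suc of_nat_add distrib_left sum.distrib) simp
  also have "D 0 + (\<Sum>g\<le>N. D (Suc g) * int (N choose Suc g)) = (\<Sum>g\<le>Suc N. D g * int (N choose g))"
    by (simp only: sum.atMost_Suc_shift) simp
  also have "\<dots> = f N"
    using Suc[of f] by (simp add: D_def)
  also have "(\<Sum>g\<le>N. D (Suc g) * int (N choose g)) = fdiff f N"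
    using Suc[of "fdiff f"] by (simp add: D_def fdiff_funpow_Suc del: funpow.simps(2))
  finally have "(\<Sum>g\<le>Suc N. D g * int (Suc N choose g)) = f N + fdiff f N" .
  moreover have "f N + fdiff f N = f (Suc N)"
    by (simp add: fdiff_def)
  ultimately show ?case
    by (simp add: D_def)
qed

lemma fdiff_funpow_sum:
  "(fdiff ^^ k) (\<lambda>y. \<Sum>j\<in>A. f j y) = (\<lambda>y. \<Sum>j\<in>A. (fdiff ^^ k) (f j) y)"
proof (induction k arbitrary: f)
  case 0
  then show ?case by simp
next
  case (Suc k)
  have "fdiff (\<lambda>y. \<Sum>j\<in>A. f j y) = (\<lambda>y. \<Sum>j\<in>A. fdiff (f j) y)"
    by (simp add: fdiff_def fun_eq_iff sum_subtractf)
  then show ?case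
    using Suc[of "\<lambda>j. fdiff (f j)"] by (simp add: fdiff_funpow_Suc del: funpow.simps(2))
qed

lemma fdiff_funpow_cmult: "(fdiff ^^ k) (\<lambda>y. c * f y) = (\<lambda>y. c * (fdiff ^^ k) f y)"
proof (induction k arbitrary: f)
  case 0
  then show ?case by simp
next
  case (Suc k)
  have "fdiff (\<lambda>y. c * f y) = (\<lambda>y. c * fdiff f y)"
    by (simp add: fdiff_def fun_eq_iff algebra_simps)
  then show ?case
    using Suc[of "fdiff f"] by (simp add: fdiff_funpow_Suc del: funpow.simps(2))
qed

lemma fdiff_funpow_affine_eq_0:
  assumes "(fdiff ^^ k) w = (\<lambda>_. 0)"
  shows "(fdiff ^^ k) (\<lambda>y. w (a * y + c)) = (\<lambda>_. 0)"
  using assms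
proof (induction k arbitrary: w c)
  case 0
  then show ?case by simp
next
  case (Suc k)
  have "fdiff (\<lambda>y. w (a * y + c)) = (\<lambda>y. \<Sum>j<a. fdiff w (a * y + (c + j)))"
    using sum_lessThan_telescope[of "\<lambda>j. w (a * _ + c + j)" a]
    by (simp add: fdiff_def fun_eq_iff algebra_simps)
  then have "(fdiff ^^ Suc k) (\<lambda>y. w (a * y + c)) = (\<lambda>y. \<Sum>j<a. (fdiff ^^ k) (\<lambda>y. fdiff w (a * y + (c + j))) y)"
    by (simp add: fdiff_funpow_Suc fdiff_funpow_sum del: funpow.simps(2))
  also have "\<dots> = (\<lambda>_. 0)"
    using Suc.IH[of "fdiff w"] Suc.prems by (simp add: fdiff_funpow_Suc del: funpow.simps(2))
  finally show ?case .
qed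

lemma coprime_if_prime_factors_greater:
  fixes a g :: nat
  assumes "\<And>p. prime p \<Longrightarrow> p dvd a \<Longrightarrow> g < p" and "0 < g"
  shows "coprime g a"
proof (rule ccontr)
  assume "\<not> coprime g a"
  then have "gcd g a \<noteq> 1"
    by (simp add: coprime_iff_gcd_eq_1)
  then obtain p where "prime p" and p_dvd: "p dvd g" "p dvd a"
    using prime_factor_nat by (metis gcd_dvd1 gcd_dvd2 dvd_trans)
  have "p \<le> g"
    using p_dvd(1) \<open>0 < g\<close> by (rule dvd_imp_le)
  then show False
    using assms(1)[OF \<open>prime p\<close> p_dvd(2)] by simp
qed

lemma dvd_binomial_mult:
  fixes a g Z :: nat
  assumes "coprime g a" and "0 < g"
  shows "a dvd (a * Z) choose g"
proof -
  have "g * ((a * Z) choose g) = a * Z * ((a * Z - 1) choose (g - 1))"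
    using times_binomial_minus1_eq[OF \<open>0 < g\<close>] .
  then have "a dvd g * ((a * Z) choose g)"
    by (metis dvd_mult2 dvd_triv_left)
  then show ?thesis
    using assms(1) by (simp add: coprime_commute coprime_dvd_mult_right_iff)
qed

lemma int_dvd_partial_sum_mult:
  fixes w :: "nat \<Rightarrow> int"
  assumes w: "(fdiff ^^ k) w = (\<lambda>_. 0)" and a: "\<And>p. prime p \<Longrightarrow> p dvd a \<Longrightarrow> k < p"
  shows "int a dvd (\<Sum>u<a * Z. w u)"
proof -
  define S where "S N = (\<Sum>u<N. w u)" for N
  have "fdiff S = w"
    by (simp add: S_def fdiff_def fun_eq_iff)
  then have S_high: "(fdiff ^^ g) S = (\<lambda>_. 0)" if "k < g" for g
    using fdiff_funpow_eq_0_mono[of "Suc k" S g] that w by (simp add: fdiff_funpow_Suc del: funpow.simps(2))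
  have "int a dvd (fdiff ^^ g) S 0 * int ((a * Z) choose g)" for g
  proof (cases "g = 0 \<or> k < g")
    case True
    then show ?thesis
      using S_high by (auto simp: S_def)
  next
    case False
    then have "coprime g a"
      using a by (metis coprime_if_prime_factors_greater le_less_trans not_less neq0_conv)
    then show ?thesis
      using False dvd_binomial_mult by (simp add: int_dvd_int_iff)
  qed
  then have "int a dvd (\<Sum>g\<le>a * Z. (fdiff ^^ g) S 0 * int ((a * Z) choose g))"
    by (simp add: dvd_sum)
  then have "int a dvd S (a * Z)"
    by (simp only: newton_forward_difference[of S "a * Z"])
  then show ?thesis
    by (simp only: S_def)
qed

lemma fdiff_funpow_cmult_eq_0_iff:
  assumes "c \<noteq> 0"
  shows "(fdiff ^^ k) (\<lambda>y. c * f y) = (\<lambda>_. 0) \<longleftrightarrow> (fdiff ^^ k) f = (\<lambda>_. 0)"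
  using assms by (simp add: fdiff_funpow_cmult fun_eq_iff)

lemma fdiff_funpow_block_sums_eq_0:
  fixes w :: "nat \<Rightarrow> int"
  assumes "0 < a" and w: "(fdiff ^^ k) w = (\<lambda>_. 0)" and "\<And>p. prime p \<Longrightarrow> p dvd a \<Longrightarrow> k < p"
  shows "(fdiff ^^ Suc k) (\<lambda>z. (\<Sum>u<a * z + a. w u) div int a) = (\<lambda>_. 0)"
proof -
  define S where "S N = (\<Sum>u<N. w u)" for N
  have "fdiff S = w"
    by (simp add: S_def fdiff_def fun_eq_iff)
  then have "(fdiff ^^ Suc k) S = (\<lambda>_. 0)"
    using w by (simp add: fdiff_funpow_Suc del: funpow.simps(2))
  then have vanish: "(fdiff ^^ Suc k) (\<lambda>z. S (a * z + a)) = (\<lambda>_. 0)"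
    by (rule fdiff_funpow_affine_eq_0)
  have "int a dvd S (a * z + a)" for z
    using int_dvd_partial_sum_mult[OF w assms(3), where Z = "Suc z"]
    by (simp add: S_def add.commute)
  then have "(\<lambda>z. int a * (S (a * z + a) div int a)) = (\<lambda>z. S (a * z + a))"
    by simp
  then have "(fdiff ^^ Suc k) (\<lambda>z. int a * (S (a * z + a) div int a)) = (\<lambda>_. 0)"
    using vanish by (simp only:)
  then show ?thesis
    using \<open>0 < a\<close> by (simp only: fdiff_funpow_cmult_eq_0_iff of_nat_eq_0_iff neq0_conv S_def)
qed

definition conv :: "(nat \<Rightarrow> int) \<Rightarrow> (nat \<Rightarrow> nat) \<Rightarrow> nat \<Rightarrow> int" where
  "conv w g K = (\<Sum>i<K. w (K - 1 - i) * int (g i))"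

lemma conv_cmult: "conv (\<lambda>z. c * w z) g K = c * conv w g K"
  by (simp add: conv_def sum_distrib_left mult.assoc)

lemma sum_reversed_interval:
  fixes w :: "nat \<Rightarrow> int"
  assumes "c \<le> d"
  shows "(\<Sum>k\<in>{c..<d}. w (d - 1 - k)) = (\<Sum>u<d - c. w u)"
proof -
  have "(\<Sum>k\<in>{c..<d}. w (d - 1 - k)) = (\<Sum>k\<in>{c..<d}. w (k - c))"
    by (subst sum.atLeastLessThan_rev) (auto intro!: sum.cong)
  also have "\<dots> = (\<Sum>u<d - c. w u)"
    using assms by (simp add: sum.atLeastLessThan_shift_0 atLeast0LessThan)
  finally show ?thesis .
qed

lemma sum_block_tail:
  fixes w :: "nat \<Rightarrow> int"
  assumes "0 < a" and "j < K"
  shows "(\<Sum>k\<in>{k \<in> {..<a * K}. j \<le> k div a}. w (a * K - 1 - k)) = (\<Sum>u<a * (K - 1 - j) + a. w u)"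
proof -
  have "{k \<in> {..<a * K}. j \<le> k div a} = {a * j..<a * K}"
    using \<open>0 < a\<close> by (auto simp: less_eq_div_iff_mult_less_eq mult.commute)
  moreover have "K - j = Suc (K - 1 - j)"
    using \<open>j < K\<close> by simp
  then have "a * K - a * j = a * (K - 1 - j) + a"
    by (metis diff_mult_distrib2 mult_Suc_right add.commute)
  moreover have "a * j \<le> a * K"
    using \<open>j < K\<close> by simp
  ultimately show ?thesis
    by (simp only: sum_reversed_interval)
qed

lemma conv_block_partial_sums:
  fixes w :: "nat \<Rightarrow> int"
  assumes "0 < a" and f: "\<And>k. f k = (\<Sum>j\<le>k div a. g j)"
  shows "conv w f (a * K) = conv (\<lambda>z. \<Sum>u<a * z + a. w u) g K"
proof -
  have "conv w f (a * K) = (\<Sum>k<a * K. \<Sum>j\<in>{j \<in> {..<K}. j \<le> k div a}. w (a * K - 1 - k) * int (g j))"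
    unfolding conv_def
  proof (rule sum.cong[OF refl])
    fix k assume "k \<in> {..<a * K}"
    then have "k div a < K"
      using \<open>0 < a\<close> by (simp add: div_less_iff_less_mult mult.commute)
    then have "{..k div a} = {j \<in> {..<K}. j \<le> k div a}"
      by auto
    then show "w (a * K - 1 - k) * int (f k) = (\<Sum>j\<in>{j \<in> {..<K}. j \<le> k div a}. w (a * K - 1 - k) * int (g j))"
      by (simp add: f sum_distrib_left)
  qed
  also have "\<dots> = (\<Sum>j<K. \<Sum>k\<in>{k \<in> {..<a * K}. j \<le> k div a}. w (a * K - 1 - k) * int (g j))"
    by (rule sum.swap_restrict) auto
  also have "\<dots> = (\<Sum>j<K. (\<Sum>u<a * (K - 1 - j) + a. w u) * int (g j))"
    using sum_block_tail[OF \<open>0 < a\<close>, of _ K w] by (simp add: sum_distrib_right[symmetric])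
  finally show ?thesis
    by (simp add: conv_def)
qed

definition partitions_into :: "nat set \<Rightarrow> nat \<Rightarrow> nat multiset set" where
  "partitions_into B N = {P. set_mset P \<subseteq> B \<and> sum_mset P = N}"

lemma size_le_sum_mset: "0 \<notin># P \<Longrightarrow> size P \<le> sum_mset (P :: nat multiset)"
  by (induction P) auto

lemma finite_partitions_into:
  assumes "0 \<notin> B"
  shows "finite (partitions_into B N)"
proof (rule finite_subset)
  show "partitions_into B N \<subseteq> (\<Union>n\<le>N. multisets_of_size {..N} n)"
  proof
    fix P assume P: "P \<in> partitions_into B N"
    then have "0 \<notin># P" and sum: "sum_mset P = N"
      using assms by (auto simp: partitions_into_def)
    then have "size P \<le> N"
      using size_le_sum_mset by auto
    moreover have "set_mset P \<subseteq> {..N}"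
      using sum by (auto dest!: multi_member_split)
    ultimately show "P \<in> (\<Union>n\<le>N. multisets_of_size {..N} n)"
      by (auto simp: multisets_of_size_def)
  qed
qed auto

lemma partition_insert_1_decompose:
  fixes a :: nat
  assumes "0 < a" and "set_mset P \<subseteq> insert 1 ((*) a ` B)"
  obtains Q where "set_mset Q \<subseteq> B" and "P = image_mset ((*) a) Q + replicate_mset (count P 1) 1"
proof
  define P' where "P' = filter_mset (\<lambda>x. x \<noteq> 1) P"
  have P'_mult: "set_mset P' \<subseteq> (*) a ` B"
    using assms(2) by (auto simp: P'_def)
  show "set_mset (image_mset (\<lambda>x. x div a) P') \<subseteq> B"
    using P'_mult \<open>0 < a\<close> by auto
  have "image_mset ((*) a) (image_mset (\<lambda>x. x div a) P') = image_mset (\<lambda>x. x) P'"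
    unfolding multiset.map_comp comp_def using P'_mult \<open>0 < a\<close> by (intro image_mset_cong) auto
  moreover have "P = P' + replicate_mset (count P 1) 1"
    unfolding P'_def using multiset_partition[of P "\<lambda>x. x \<noteq> 1"]
    by (simp add: filter_eq_replicate_mset)
  ultimately show "P = image_mset ((*) a) (image_mset (\<lambda>x. x div a) P') + replicate_mset (count P 1) 1"
    by simp
qed

lemma mult_image_add_replicate_1_eq_iff:
  fixes a :: nat
  assumes "2 \<le> a" and "0 \<notin># Q" and "0 \<notin># Q'"
  shows "image_mset ((*) a) Q + replicate_mset c 1 = image_mset ((*) a) Q' + replicate_mset c' 1
    \<longleftrightarrow> Q = Q' \<and> c = c'"
proof
  assume eq: "image_mset ((*) a) Q + replicate_mset c 1 = image_mset ((*) a) Q' + replicate_mset c' 1"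
  have "count (image_mset ((*) a) R) 1 = 0" if "0 \<notin># R" for R
    using that assms(1) by (auto simp: count_eq_zero_iff)
  then have "c = c'"
    using arg_cong[OF eq, of "\<lambda>P. count P 1"] assms(2,3) by simp
  moreover have "inj ((*) a)"
    using assms(1) by (simp add: inj_on_def)
  then have "Q = Q'"
    using eq \<open>c = c'\<close> by (auto dest: multiset.inj_map[THEN injD])
  ultimately show "Q = Q' \<and> c = c'"
    by simp
qed simp

lemma card_partitions_into_insert_1:
  fixes a :: nat
  assumes "2 \<le> a" and "0 \<notin> B"
  shows "card (partitions_into (insert 1 ((*) a ` B)) N) = (\<Sum>j\<le>N div a. card (partitions_into B j))"
proof -
  define \<phi> where "\<phi> = (\<lambda>(j, Q). image_mset ((*) a) Q + replicate_mset (N - a * j) (1::nat))"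
  define A where "A = (SIGMA j:{..N div a}. partitions_into B j)"
  have sum_scaled: "sum_mset (image_mset ((*) a) Q) = a * sum_mset Q" for Q
    by (induction Q) (auto simp: distrib_left)
  have aj_le: "a * j \<le> N" if "j \<le> N div a" for j
    using that by (metis div_times_less_eq_dividend dual_order.trans mult.commute mult_le_mono2)
  have "inj_on \<phi> A"
  proof (rule inj_onI, clarify)
    fix j Q j' Q'
    assume in_A: "(j, Q) \<in> A" "(j', Q') \<in> A" and "\<phi> (j, Q) = \<phi> (j', Q')"
    then have "Q = Q'" and "N - a * j = N - a * j'"
      using assms mult_image_add_replicate_1_eq_iff[of a Q Q']
      by (auto simp: \<phi>_def A_def partitions_into_def)
    moreover have "a * j \<le> N" "a * j' \<le> N"
      using in_A aj_le by (auto simp: A_def)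
    ultimately have "a * j = a * j'"
      by linarith
    with \<open>Q = Q'\<close> show "j = j' \<and> Q = Q'"
      using assms(1) by simp
  qed
  moreover have "\<phi> ` A = partitions_into (insert 1 ((*) a ` B)) N"
  proof (intro equalityI subsetI)
    fix P assume "P \<in> \<phi> ` A"
    then obtain j Q where "j \<le> N div a" "Q \<in> partitions_into B j" "P = \<phi> (j, Q)"
      by (auto simp: A_def)
    then show "P \<in> partitions_into (insert 1 ((*) a ` B)) N"
      using aj_le[of j] by (auto simp: \<phi>_def partitions_into_def sum_scaled)
  next
    fix P assume P: "P \<in> partitions_into (insert 1 ((*) a ` B)) N"
    then obtain Q where Q: "set_mset Q \<subseteq> B" and P_eq: "P = image_mset ((*) a) Q + replicate_mset (count P 1) 1"
      using partition_insert_1_decompose[of a P B] assms(1) by (auto simp: partitions_into_def)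
    have N_eq: "N = a * sum_mset Q + count P 1"
      using P by (subst (asm) P_eq) (simp add: partitions_into_def sum_scaled)
    then have "sum_mset Q \<le> N div a"
      using assms(1) by (metis div_le_mono le_add1 nonzero_mult_div_cancel_left not_numeral_le_zero le_0_eq)
    moreover have "P = \<phi> (sum_mset Q, Q)"
      using P_eq N_eq by (simp add: \<phi>_def)
    ultimately show "P \<in> \<phi> ` A"
      using Q by (auto simp: A_def partitions_into_def)
  qed
  ultimately have "card (partitions_into (insert 1 ((*) a ` B)) N) = card A"
    by (metis card_image)
  also have "\<dots> = (\<Sum>j\<le>N div a. card (partitions_into B j))"
    unfolding A_def using finite_partitions_into[OF assms(2)] by (simp add: card_SigmaI)
  finally show ?thesis .
qed

definition mary_parts :: "(nat \<Rightarrow> nat) \<Rightarrow> enat \<Rightarrow> nat set" where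
  "mary_parts m L = {Mprod m r |r. enat r \<le> L}"

definition admissible_seq :: "(nat \<Rightarrow> nat) \<Rightarrow> enat \<Rightarrow> bool" where
  "admissible_seq m L \<longleftrightarrow> m 0 = 1 \<and> (\<forall>j. 1 \<le> j \<and> enat j \<le> L \<longrightarrow> 2 \<le> m j)"

definition shift_seq :: "(nat \<Rightarrow> nat) \<Rightarrow> nat \<Rightarrow> nat" where
  "shift_seq m i = (if i = 0 then 1 else m (Suc i))"

lemma pM_eq_card_partitions_into: "pM m L N = card (partitions_into (mary_parts m L) N)"
proof -
  have "mary_partitions m L N = partitions_into (mary_parts m L) N"
    by (auto simp: mary_partitions_def partitions_into_def mary_parts_def)
  then show ?thesis
    by (simp add: pM_def)
qed

lemma enat_le_diff_1_iff: "enat 1 \<le> L \<Longrightarrow> enat r \<le> L - 1 \<longleftrightarrow> enat (Suc r) \<le> L"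
  by (cases L) (auto simp: one_enat_def)

lemma admissible_seq_pos:
  assumes "admissible_seq m L" and "enat i \<le> L"
  shows "0 < m i"
proof (cases "i = 0")
  case False
  then have "2 \<le> m i"
    using assms by (simp add: admissible_seq_def)
  then show ?thesis
    by simp
qed (use assms in \<open>simp add: admissible_seq_def\<close>)

lemma admissible_seq_shift_seq:
  assumes "admissible_seq m L" and "enat 1 \<le> L"
  shows "admissible_seq (shift_seq m) (L - 1)"
  using assms by (auto simp: admissible_seq_def shift_seq_def enat_le_diff_1_iff)

lemma Mprod_Suc_shift_seq: "m 0 = 1 \<Longrightarrow> Mprod m (Suc r) = m 1 * Mprod (shift_seq m) r"
  by (induction r) (simp_all add: Mprod_def shift_seq_def)

lemma Mprod_pos: "admissible_seq m L \<Longrightarrow> enat r \<le> L \<Longrightarrow> 0 < Mprod m r"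
  unfolding Mprod_def by (rule prod_pos) (meson admissible_seq_pos atMost_iff enat_ord_simps(1) order_trans)

lemma zero_notin_mary_parts: "admissible_seq m L \<Longrightarrow> 0 \<notin> mary_parts m L"
  using Mprod_pos by (fastforce simp: mary_parts_def)

lemma mary_parts_shift_seq:
  assumes "admissible_seq m L" and "enat 1 \<le> L"
  shows "mary_parts m L = insert 1 ((*) (m 1) ` mary_parts (shift_seq m) (L - 1))"
proof -
  have m0: "m 0 = 1"
    using assms(1) by (simp add: admissible_seq_def)
  have "Mprod m r \<in> insert 1 ((*) (m 1) ` mary_parts (shift_seq m) (L - 1))" if "enat r \<le> L" for r
  proof (cases r)
    case (Suc r')
    then show ?thesis
      using that assms(2) m0 by (auto simp: mary_parts_def Mprod_Suc_shift_seq enat_le_diff_1_iff)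
  qed (simp add: Mprod_def m0)
  moreover have "Mprod m 0 \<in> mary_parts m L"
    unfolding mary_parts_def by (auto intro!: exI[of _ 0] simp: zero_enat_def[symmetric])
  moreover have "m 1 * Mprod (shift_seq m) r \<in> mary_parts m L" if "enat r \<le> L - 1" for r
    unfolding mary_parts_def Mprod_Suc_shift_seq[of m, OF m0, symmetric]
    using that assms(2) by (auto simp: enat_le_diff_1_iff)
  ultimately show ?thesis
    using m0 by (auto simp: Mprod_def mary_parts_def[of m L] mary_parts_def[of "shift_seq m"])
qed

lemma pM_shift_seq:
  assumes "admissible_seq m L" and "enat 1 \<le> L"
  shows "pM m L N = (\<Sum>j\<le>N div m 1. pM (shift_seq m) (L - 1) j)"
proof -
  have "2 \<le> m 1"
    using assms by (simp add: admissible_seq_def)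
  moreover have "0 \<notin> mary_parts (shift_seq m) (L - 1)"
    using assms by (intro zero_notin_mary_parts admissible_seq_shift_seq)
  ultimately show ?thesis
    unfolding pM_eq_card_partitions_into mary_parts_shift_seq[OF assms]
    by (rule card_partitions_into_insert_1)
qed

lemma pM_mult_minus_1:
  assumes "admissible_seq m L" and "enat 1 \<le> L" and "0 < K"
  shows "pM m L (m 1 * K - 1) = (\<Sum>j<K. pM (shift_seq m) (L - 1) j)"
proof -
  have "0 < m 1"
    using assms by (intro admissible_seq_pos)
  then have "(m 1 * K - 1) div m 1 = K - 1"
    using \<open>0 < K\<close> by (intro div_nat_eqI) (auto simp: diff_mult_distrib2)
  moreover have "{..K - 1} = {..<K}"
    using \<open>0 < K\<close> by auto
  ultimately show ?thesis
    using assms by (simp add: pM_shift_seq)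
qed

lemma prod_shift_seq: "(\<Prod>j\<in>{1..s}. shift_seq m j) = (\<Prod>j\<in>{2..Suc s}. m j)"
  by (simp only: numeral_2_eq_2 prod.shift_bounds_cl_Suc_ivl) (simp add: shift_seq_def)

lemma prod_Suc_shift_seq: "(\<Prod>j\<in>{1..Suc s}. m j) = m 1 * (\<Prod>j\<in>{1..s}. shift_seq m j)"
proof -
  have "(\<Prod>j\<in>{1..Suc s}. m j) = m 1 * (\<Prod>j\<in>{Suc 1..Suc s}. m j)"
    by (rule prod.atLeast_Suc_atMost) simp
  then show ?thesis
    by (simp only: prod_shift_seq Suc_1)
qed

lemma admissible_seq_prod_pos: "admissible_seq m L \<Longrightarrow> enat s \<le> L \<Longrightarrow> 0 < (\<Prod>j\<in>{1..s}. m j)"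
  by (intro prod_pos ballI admissible_seq_pos) (auto intro: order_trans[of _ "enat s"])

lemma conv_pM_shift_seq:
  fixes w :: "nat \<Rightarrow> int"
  assumes "admissible_seq m L" and "enat 1 \<le> L"
    and w: "(fdiff ^^ k) w = (\<lambda>_. 0)" and primes: "\<And>p. prime p \<Longrightarrow> p dvd m 1 \<Longrightarrow> k < p"
  shows "conv w (pM m L) (m 1 * K)
    = int (m 1) * conv (\<lambda>z. (\<Sum>u<m 1 * z + m 1. w u) div int (m 1)) (pM (shift_seq m) (L - 1)) K"
proof -
  have "0 < m 1"
    using assms(1,2) by (rule admissible_seq_pos)
  have "int (m 1) dvd (\<Sum>u<m 1 * z + m 1. w u)" for z
    using int_dvd_partial_sum_mult[OF w primes, where Z = "Suc z"] by (simp add: add.commute)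
  then have "(\<lambda>z. \<Sum>u<m 1 * z + m 1. w u) = (\<lambda>z. int (m 1) * ((\<Sum>u<m 1 * z + m 1. w u) div int (m 1)))"
    by simp
  moreover have "conv w (pM m L) (m 1 * K) = conv (\<lambda>z. \<Sum>u<m 1 * z + m 1. w u) (pM (shift_seq m) (L - 1)) K"
    using \<open>0 < m 1\<close> pM_shift_seq[OF assms(1,2)] by (rule conv_block_partial_sums)
  ultimately show ?thesis
    by (simp only: conv_cmult)
qed

lemma prod_dvd_conv_pM:
  fixes w :: "nat \<Rightarrow> int"
  assumes "admissible_seq m L" and "enat s \<le> L"
    and "\<And>j p. j \<in> {1..s} \<Longrightarrow> prime p \<Longrightarrow> p dvd m j \<Longrightarrow> k + j \<le> p"
    and "(fdiff ^^ k) w = (\<lambda>_. 0)"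
  shows "int (\<Prod>j\<in>{1..s}. m j) dvd conv w (pM m L) ((\<Prod>j\<in>{1..s}. m j) * n)"
  using assms
proof (induction s arbitrary: m L k w)
  case 0
  then show ?case by simp
next
  case (Suc s)
  define K where "K = (\<Prod>j\<in>{1..s}. shift_seq m j) * n"
  define w' where "w' = (\<lambda>z. (\<Sum>u<m 1 * z + m 1. w u) div int (m 1))"
  have "enat 1 \<le> L"
    by (rule order_trans[OF _ Suc.prems(2)]) simp
  have primes_1: "k < p" if "prime p" "p dvd m 1" for p
    using Suc.prems(3)[of 1 p] that by simp
  have "int (\<Prod>j\<in>{1..s}. shift_seq m j) dvd conv w' (pM (shift_seq m) (L - 1)) K"
    unfolding K_def
  proof (rule Suc.IH)
    show "admissible_seq (shift_seq m) (L - 1)"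
      using Suc.prems(1) \<open>enat 1 \<le> L\<close> by (rule admissible_seq_shift_seq)
    show "enat s \<le> L - 1"
      using Suc.prems(2) \<open>enat 1 \<le> L\<close> by (simp add: enat_le_diff_1_iff)
    show "Suc k + j \<le> p" if "j \<in> {1..s}" "prime p" "p dvd shift_seq m j" for j p
      using Suc.prems(3)[of "Suc j" p] that by (simp add: shift_seq_def)
    show "(fdiff ^^ Suc k) w' = (\<lambda>_. 0)"
      unfolding w'_def using admissible_seq_pos[OF Suc.prems(1) \<open>enat 1 \<le> L\<close>] Suc.prems(4) primes_1
      by (rule fdiff_funpow_block_sums_eq_0)
  qed
  then have "int (m 1) * int (\<Prod>j\<in>{1..s}. shift_seq m j) dvd int (m 1) * conv w' (pM (shift_seq m) (L - 1)) K"
    by (rule mult_dvd_mono[OF dvd_refl])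
  also have "\<dots> = conv w (pM m L) (m 1 * K)"
    unfolding w'_def using Suc.prems(1) \<open>enat 1 \<le> L\<close> Suc.prems(4) primes_1
    by (rule conv_pM_shift_seq[symmetric])
  finally show ?case
    by (simp only: prod_Suc_shift_seq K_def of_nat_mult mult.assoc)
qed

lemma prod_dvd_pM_mult_minus_1:
  assumes adm: "admissible_seq m L" and r_le: "enat (Suc s) \<le> L"
    and primes: "\<And>j p. j \<in> {2..Suc s} \<Longrightarrow> prime p \<Longrightarrow> p dvd m j \<Longrightarrow> j \<le> p" and "0 < n"
  shows "(\<Prod>j\<in>{2..Suc s}. m j) dvd pM m L ((\<Prod>j\<in>{1..Suc s}. m j) * n - 1)"
proof -
  have "enat 1 \<le> L"
    by (rule order_trans[OF _ r_le]) simp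
  have adm': "admissible_seq (shift_seq m) (L - 1)"
    using adm \<open>enat 1 \<le> L\<close> by (rule admissible_seq_shift_seq)
  have s_le: "enat s \<le> L - 1"
    using r_le \<open>enat 1 \<le> L\<close> by (simp add: enat_le_diff_1_iff)
  define P where "P = (\<Prod>j\<in>{1..s}. shift_seq m j)"
  have "int P dvd conv (\<lambda>_. 1) (pM (shift_seq m) (L - 1)) (P * n)"
    unfolding P_def
  proof (rule prod_dvd_conv_pM[OF adm' s_le])
    show "1 + j \<le> p" if "j \<in> {1..s}" "prime p" "p dvd shift_seq m j" for j p
      using primes[of "Suc j" p] that by (simp add: shift_seq_def)
    show "(fdiff ^^ 1) (\<lambda>_. 1) = (\<lambda>_. 0)"
      by (simp add: fdiff_def fun_eq_iff)
  qed
  moreover have "pM m L (m 1 * (P * n) - 1) = (\<Sum>j<P * n. pM (shift_seq m) (L - 1) j)"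
    using admissible_seq_prod_pos[OF adm' s_le] \<open>0 < n\<close>
    by (intro pM_mult_minus_1[OF adm \<open>enat 1 \<le> L\<close>]) (simp add: P_def)
  ultimately have "P dvd pM m L (m 1 * (P * n) - 1)"
    by (simp add: conv_def flip: int_dvd_int_iff)
  then show ?thesis
    by (simp only: P_def prod_Suc_shift_seq mult.assoc flip: prod_shift_seq)
qed

theorem corollary1p4:
  fixes m :: "nat \<Rightarrow> nat" and L :: enat and n r :: nat
  assumes m0: "m 0 = 1"
    and m_ge2: "\<forall>j. 1 \<le> j \<and> enat j \<le> L \<longrightarrow> m j \<ge> 2"
    and prime_cond: "\<forall>t p. 1 \<le> t \<and> enat t \<le> L \<and> prime p \<and> p dvd m t \<longrightarrow> p \<ge> t"
    and n_pos: "n > 0" and r_pos: "r > 0" and r_le: "enat r \<le> L"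
  shows "(\<Prod>t\<in>{2..r}. m t) dvd pM m L ((\<Prod>i\<in>{1..r}. m i) * n - 1)"
proof -
  obtain s where r: "r = Suc s"
    using r_pos by (cases r) auto
  have "admissible_seq m L"
    using m0 m_ge2 by (simp add: admissible_seq_def)
  moreover have "j \<le> p" if "j \<in> {2..r}" "prime p" "p dvd m j" for j p
  proof -
    have "enat j \<le> L"
      using that(1) by (auto intro: order_trans[OF _ r_le])
    then show ?thesis
      using prime_cond that by auto
  qed
  ultimately show ?thesis
    using r_le n_pos unfolding r by (intro prod_dvd_pM_mult_minus_1)
qed

end
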